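(* Let $h$ be an interaction anchored in $X$ and $h'$ an interaction anchored in $X'$. Assume that $\sum_{x\in X}\sum_{x'\in X'}f(1+|x-x'|)<\infty$ for every $f\in\mathcal F$. Then the commutator interaction $[h,h']$ is summable; in fact $\sum_S\|[h,h']_S\|<\infty$.
   Context: $\mathcal A$ is the quasi-local $C^*$-algebra on $\mathbb Z^2$ with on-site $M_d(\mathbb C)$, with local subalgebras $\mathcal A_S$ and $\ell^\infty$ distances and diameters; $|x-x'|$ is the $\ell^\infty$ distance. $\mathcal F$ is the set of strictly positive non-increasing $f:\{1,2,\dots\}\to(0,\infty)$ with $r^pf(r)\to0$ for all $p$. An interaction $h$ assigns $h_S\in\mathcal A_S$ to finite $S$. $\|h\|_f=\sup_x\sum_{S\ni x}\|h_S\|/f(1+\mathrm{diam}S)$, and $\mathcal J$ is the set of interactions with some finite $\|h\|_f$. $h$ is anchored in $X$ if $h\in\mathcal J$ and $h_S=0$ whenever $S\cap X=\emptyset$. The commutator is $[h,h']_S=\sum_{S_1\cup S_2=S,\,S_1\cap S_2\ne\emptyset}[h_{S_1},h'_{S_2}]$. An interaction is summable if $\sum_S h_S$ converges in norm. *)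

theory Defs
  imports "HOL-Analysis.Analysis"
begin

type_synonym site = "int \<times> int"

definition dist_inf :: "site \<Rightarrow> site \<Rightarrow> nat" where
  "dist_inf x y = nat (max \<bar>fst x - fst y\<bar> \<bar>snd x - snd y\<bar>)"

definition diam_inf :: "site set \<Rightarrow> nat" where
  "diam_inf S = (if S = {} then 0 else Max ((\<lambda>(x, y). dist_inf x y) ` (S \<times> S)))"

text \<open>The class F: strictly positive, non-increasing functions on {1,2,...}
  with r^p f(r) -> 0 for every p. (Values at 0 are irrelevant.)\<close>
definition decay_class :: "(nat \<Rightarrow> real) \<Rightarrow> bool" where
  "decay_class f \<longleftrightarrow>
     (\<forall>r\<ge>1. f r > 0) \<and>
     (\<forall>r s. 1 \<le> r \<longrightarrow> r \<le> s \<longrightarrow> f s \<le> f r) \<and>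
     (\<forall>p::nat. ((\<lambda>r. real r ^ p * f r) \<longlonglongrightarrow> 0))"

definition quasi_local :: "(site set \<Rightarrow> 'a::{real_normed_algebra_1,banach} set) \<Rightarrow> bool" where
  "quasi_local A \<longleftrightarrow>
     (\<forall>S. finite S \<longrightarrow>
        0 \<in> A S \<and> 1 \<in> A S \<and> closed (A S) \<and>
        (\<forall>a\<in>A S. \<forall>b\<in>A S. a + b \<in> A S \<and> a * b \<in> A S) \<and>
        (\<forall>c::real. \<forall>a\<in>A S. c *\<^sub>R a \<in> A S)) \<and>
     (\<forall>S T. finite T \<longrightarrow> S \<subseteq> T \<longrightarrow> A S \<subseteq> A T) \<and>
     (\<forall>S T. finite S \<longrightarrow> finite T \<longrightarrow> S \<inter> T = {} \<longrightarrow>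
        (\<forall>a\<in>A S. \<forall>b\<in>A T. a * b = b * a)) \<and>
     closure (\<Union>S\<in>{S. finite S}. A S) = UNIV"

definition is_interaction :: "(site set \<Rightarrow> 'a::{real_normed_algebra_1,banach} set)
    \<Rightarrow> (site set \<Rightarrow> 'a) \<Rightarrow> bool" where
  "is_interaction A h \<longleftrightarrow>
     (\<forall>S. (finite S \<and> S \<noteq> {} \<longrightarrow> h S \<in> A S) \<and> (\<not> (finite S \<and> S \<noteq> {}) \<longrightarrow> h S = 0))"

definition fnorm_finite :: "(nat \<Rightarrow> real) \<Rightarrow> (site set \<Rightarrow> 'a::real_normed_vector) \<Rightarrow> bool" where
  "fnorm_finite f h \<longleftrightarrow>
     (\<forall>x. (\<lambda>S. norm (h S) / f (1 + diam_inf S)) summable_on {S. finite S \<and> x \<in> S}) \<and>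
     bdd_above (range (\<lambda>x. \<Sum>\<^sub>\<infinity>S\<in>{S. finite S \<and> x \<in> S}. norm (h S) / f (1 + diam_inf S)))"

definition in_J :: "(site set \<Rightarrow> 'a::{real_normed_algebra_1,banach} set)
    \<Rightarrow> (site set \<Rightarrow> 'a) \<Rightarrow> bool" where
  "in_J A h \<longleftrightarrow> is_interaction A h \<and> (\<exists>f. decay_class f \<and> fnorm_finite f h)"

definition anchored :: "(site set \<Rightarrow> 'a::{real_normed_algebra_1,banach} set)
    \<Rightarrow> (site set \<Rightarrow> 'a) \<Rightarrow> site set \<Rightarrow> bool" where
  "anchored A h X \<longleftrightarrow> in_J A h \<and> (\<forall>S. S \<inter> X = {} \<longrightarrow> h S = 0)"

definition comm_int :: "(site set \<Rightarrow> 'a::ring) \<Rightarrow> (site set \<Rightarrow> 'a) \<Rightarrow> site set \<Rightarrow> 'a" where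
  "comm_int h h' S =
     (if finite S then
        (\<Sum>p\<in>{(S1, S2). S1 \<subseteq> S \<and> S2 \<subseteq> S \<and> S1 \<union> S2 = S \<and> S1 \<inter> S2 \<noteq> {}}.
            h (fst p) * h' (snd p) - h' (snd p) * h (fst p))
      else 0)"

end

theory Submission
  imports Defs
begin

text \<open>If two sets overlap, the distance between a point of the first and a point of the second
  is at most the sum of their diameters, so one of the two diameters is at least half of it.
  Summing the f-norm of h over sets through x and the g-norm of h' over sets through x', with
  the larger diameter paid for by the decay, bounds the contribution of all overlapping pairs
  anchored at (x, x') by a constant times F(1 + |x - x'|), where F n = f(1 + n/2) + g(1 + n/2)
  is again in the decay class. Charging every overlapping pair to one pair of anchors in
  X \<times> X' then makes the total finite.\<close>

lemma decay_class_add: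
  assumes "decay_class f" "decay_class g"
  shows "decay_class (\<lambda>n. f n + g n)"
proof -
  have "((\<lambda>r. real r ^ p * (f r + g r)) \<longlonglongrightarrow> 0)" for p
    using tendsto_add[of "\<lambda>r. real r ^ p * f r" 0 _ "\<lambda>r. real r ^ p * g r" 0] assms
    unfolding decay_class_def by (simp add: distrib_left)
  then show ?thesis
    using assms unfolding decay_class_def by (auto intro: add_mono add_pos_pos)
qed

lemma decay_class_half_shift:
  assumes "decay_class f"
  shows "decay_class (\<lambda>n. f (1 + n div 2))"
proof -
  have pos: "\<And>r. r \<ge> 1 \<Longrightarrow> f r > 0"
    and mono: "\<And>r s. 1 \<le> r \<Longrightarrow> r \<le> s \<Longrightarrow> f s \<le> f r"
    and lim: "\<And>p. ((\<lambda>r. real r ^ p * f r) \<longlonglongrightarrow> 0)"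
    using assms unfolding decay_class_def by auto
  have "((\<lambda>r. real r ^ p * f (1 + r div 2)) \<longlonglongrightarrow> 0)" for p
  proof -
    have "filterlim (\<lambda>r::nat. 1 + r div 2) at_top sequentially"
      unfolding filterlim_at_top eventually_sequentially
      by (metis div_le_mono nonzero_mult_div_cancel_left trans_le_add2 zero_neq_numeral)
    from filterlim_compose[OF lim this]
    have "((\<lambda>r. real (1 + r div 2) ^ p * f (1 + r div 2)) \<longlonglongrightarrow> 0)"
      by (simp add: o_def)
    then have upper: "((\<lambda>r. 2 ^ p * (real (1 + r div 2) ^ p * f (1 + r div 2))) \<longlonglongrightarrow> 0)"
      using tendsto_mult_right_zero by blast
    show ?thesis
    proof (rule tendsto_sandwich[OF _ _ tendsto_const upper])
      show "\<forall>\<^sub>F n in sequentially. 0 \<le> real n ^ p * f (1 + n div 2)"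
        using pos by (intro always_eventually) (simp add: less_imp_le)
      show "\<forall>\<^sub>F n in sequentially. real n ^ p * f (1 + n div 2)
          \<le> 2 ^ p * (real (1 + n div 2) ^ p * f (1 + n div 2))"
      proof (intro always_eventually allI)
        fix n :: nat
        have "n \<le> 2 * (1 + n div 2)" by presburger
        then have "real n \<le> 2 * real (1 + n div 2)" by linarith
        then have "real n ^ p \<le> (2 * real (1 + n div 2)) ^ p" by (intro power_mono) auto
        then have "real n ^ p * f (1 + n div 2) \<le> (2 * real (1 + n div 2)) ^ p * f (1 + n div 2)"
          using pos[of "1 + n div 2"] by (intro mult_right_mono) auto
        then show "real n ^ p * f (1 + n div 2) \<le> 2 ^ p * (real (1 + n div 2) ^ p * f (1 + n div 2))"
          unfolding power_mult_distrib mult.assoc .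
      qed
    qed
  qed
  then show ?thesis
    using pos mono unfolding decay_class_def by (auto simp: div_le_mono)
qed

lemma dist_inf_triangle: "dist_inf x y \<le> dist_inf x z + dist_inf z y"
  unfolding dist_inf_def by (cases x, cases y, cases z) (simp, arith)

lemma dist_inf_le_diam_inf: "finite S \<Longrightarrow> x \<in> S \<Longrightarrow> z \<in> S \<Longrightarrow> dist_inf x z \<le> diam_inf S"
  unfolding diam_inf_def by (auto intro!: Max_ge)

lemma dist_inf_le_diam_inf_overlap:
  assumes "finite S" "finite T" "S \<inter> T \<noteq> {}" "x \<in> S" "y \<in> T"
  shows "dist_inf x y \<le> diam_inf S + diam_inf T"
proof -
  obtain z where "z \<in> S" "z \<in> T" using assms(3) by blast
  then show ?thesis
    using dist_inf_triangle[of x y z] dist_inf_le_diam_inf[of S x z] dist_inf_le_diam_inf[of T z y]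
      assms by linarith
qed

definition fnorm_le :: "(nat \<Rightarrow> real) \<Rightarrow> (site set \<Rightarrow> 'a::real_normed_vector) \<Rightarrow> real \<Rightarrow> bool" where
  "fnorm_le f h M \<longleftrightarrow>
     (\<forall>x. (\<lambda>S. norm (h S) / f (1 + diam_inf S)) summable_on {S. finite S \<and> x \<in> S} \<and>
          (\<Sum>\<^sub>\<infinity>S\<in>{S. finite S \<and> x \<in> S}. norm (h S) / f (1 + diam_inf S)) \<le> M)"

lemma fnorm_finite_imp_fnorm_le: "fnorm_finite f h \<Longrightarrow> \<exists>M. fnorm_le f h M"
  unfolding fnorm_finite_def fnorm_le_def bdd_above_def by auto

lemma fnorm_le_nonneg:
  assumes "decay_class f" "fnorm_le f h M"
  shows "0 \<le> M"
proof -
  have "0 \<le> (\<Sum>\<^sub>\<infinity>S\<in>{S. finite S \<and> x \<in> S}. norm (h S) / f (1 + diam_inf S))" for x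
    using assms(1) unfolding decay_class_def by (intro infsum_nonneg divide_nonneg_pos) auto
  then show ?thesis
    using assms(2) unfolding fnorm_le_def by (meson order_trans)
qed

lemma sum_norm_le_fnorm_le:
  assumes "decay_class f" "fnorm_le f h M"
    and "finite T" "\<And>S. S \<in> T \<Longrightarrow> finite S \<and> x \<in> S \<and> d \<le> diam_inf S"
  shows "(\<Sum>S\<in>T. norm (h S)) \<le> f (1 + d) * M"
proof -
  have pos: "\<And>r. r \<ge> 1 \<Longrightarrow> f r > 0"
    and mono: "\<And>r s. 1 \<le> r \<Longrightarrow> r \<le> s \<Longrightarrow> f s \<le> f r"
    using assms(1) unfolding decay_class_def by auto
  let ?w = "\<lambda>S. norm (h S) / f (1 + diam_inf S)"
  have "(\<Sum>S\<in>T. norm (h S)) \<le> (\<Sum>S\<in>T. f (1 + d) * ?w S)"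
  proof (rule sum_mono)
    fix S assume "S \<in> T"
    then have "f (1 + diam_inf S) \<le> f (1 + d)" using mono assms(4) by auto
    from mult_left_mono[OF this norm_ge_zero] show "norm (h S) \<le> f (1 + d) * ?w S"
      using pos[of "1 + diam_inf S"] by (simp add: field_simps)
  qed
  also have "\<dots> = f (1 + d) * (\<Sum>S\<in>T. ?w S)" by (simp add: sum_distrib_left)
  also have "\<dots> \<le> f (1 + d) * M"
  proof (rule mult_left_mono)
    have "?w summable_on {S. finite S \<and> x \<in> S}"
      using assms(2) unfolding fnorm_le_def by blast
    then have "(\<Sum>S\<in>T. ?w S) \<le> (\<Sum>\<^sub>\<infinity>S\<in>{S. finite S \<and> x \<in> S}. ?w S)"
      using assms(3,4) pos by (intro finite_sum_le_infsum divide_nonneg_pos) auto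
    then show "(\<Sum>S\<in>T. ?w S) \<le> M"
      using assms(2) unfolding fnorm_le_def by (meson order_trans)
  qed (use pos[of "1 + d"] in simp)
  finally show ?thesis .
qed

lemma sum_prod_le_prod_sum_image:
  fixes a b :: "'s \<Rightarrow> real"
  assumes "finite Q" "\<And>u. 0 \<le> a u" "\<And>v. 0 \<le> b v"
  shows "(\<Sum>p\<in>Q. a (fst p) * b (snd p)) \<le> (\<Sum>u\<in>fst ` Q. a u) * (\<Sum>v\<in>snd ` Q. b v)"
proof -
  have "(\<Sum>p\<in>Q. a (fst p) * b (snd p)) \<le> (\<Sum>p\<in>fst ` Q \<times> snd ` Q. a (fst p) * b (snd p))"
    by (rule sum_mono2) (use assms in \<open>force+\<close>)
  also have "\<dots> = (\<Sum>u\<in>fst ` Q. a u) * (\<Sum>v\<in>snd ` Q. b v)"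
    by (simp add: sum_product sum.cartesian_product case_prod_beta)
  finally show ?thesis .
qed

lemma sum_overlapping_pairs_le:
  assumes f: "decay_class f" "fnorm_le f h M"
    and g: "decay_class g" "fnorm_le g h' M'"
    and "finite Q"
    and Q: "\<And>p. p \<in> Q \<Longrightarrow> finite (fst p) \<and> finite (snd p) \<and> fst p \<inter> snd p \<noteq> {}
                              \<and> x \<in> fst p \<and> x' \<in> snd p"
  shows "(\<Sum>p\<in>Q. norm (h (fst p)) * norm (h' (snd p)))
     \<le> M * M' * (f 1 + g 1) * (f (1 + (1 + dist_inf x x') div 2) + g (1 + (1 + dist_inf x x') div 2))"
proof -
  define d where "d = (1 + dist_inf x x') div 2"
  have fpos: "\<And>r. r \<ge> 1 \<Longrightarrow> f r > 0" and gpos: "\<And>r. r \<ge> 1 \<Longrightarrow> g r > 0"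
    using f(1) g(1) unfolding decay_class_def by auto
  have M: "0 \<le> M" "0 \<le> M'" using fnorm_le_nonneg f g by auto
  define Q1 where "Q1 = {p\<in>Q. d \<le> diam_inf (fst p)}"
  have Q2: "d \<le> diam_inf (snd p)" if "p \<in> Q - Q1" for p
    using that Q[of p] dist_inf_le_diam_inf_overlap[of "fst p" "snd p" x x']
    unfolding Q1_def d_def by auto
  let ?a = "\<lambda>u. norm (h u)" and ?b = "\<lambda>v. norm (h' v)"
  have "(\<Sum>p\<in>Q1. ?a (fst p) * ?b (snd p)) \<le> (f (1 + d) * M) * (g (1 + 0) * M')"
  proof (rule order_trans[OF sum_prod_le_prod_sum_image mult_mono])
    show "(\<Sum>u\<in>fst ` Q1. ?a u) \<le> f (1 + d) * M"
      using \<open>finite Q\<close> Q by (intro sum_norm_le_fnorm_le[OF f]) (auto simp: Q1_def)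
    show "(\<Sum>v\<in>snd ` Q1. ?b v) \<le> g (1 + 0) * M'"
      using \<open>finite Q\<close> Q by (intro sum_norm_le_fnorm_le[OF g]) (auto simp: Q1_def)
  qed (use \<open>finite Q\<close> M fpos[of "1 + d"] in \<open>auto simp: Q1_def intro!: sum_nonneg\<close>)
  moreover have "(\<Sum>p\<in>Q - Q1. ?a (fst p) * ?b (snd p)) \<le> (f (1 + 0) * M) * (g (1 + d) * M')"
  proof (rule order_trans[OF sum_prod_le_prod_sum_image mult_mono])
    show "(\<Sum>u\<in>fst ` (Q - Q1). ?a u) \<le> f (1 + 0) * M"
      using \<open>finite Q\<close> Q by (intro sum_norm_le_fnorm_le[OF f]) auto
    show "(\<Sum>v\<in>snd ` (Q - Q1). ?b v) \<le> g (1 + d) * M'"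
      using \<open>finite Q\<close> Q Q2 by (intro sum_norm_le_fnorm_le[OF g]) auto
  qed (use \<open>finite Q\<close> M fpos[of 1] in \<open>auto intro!: sum_nonneg\<close>)
  moreover have "(\<Sum>p\<in>Q. ?a (fst p) * ?b (snd p))
      = (\<Sum>p\<in>Q - Q1. ?a (fst p) * ?b (snd p)) + (\<Sum>p\<in>Q1. ?a (fst p) * ?b (snd p))"
    using \<open>finite Q\<close> by (intro sum.subset_diff) (auto simp: Q1_def)
  moreover have "M * M' * (f 1 * g (1 + d) + f (1 + d) * g 1)
      \<le> M * M' * ((f 1 + g 1) * (f (1 + d) + g (1 + d)))"
    using M fpos[of 1] gpos[of 1] fpos[of "1 + d"] gpos[of "1 + d"]
    by (intro mult_left_mono) (simp_all add: algebra_simps)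
  ultimately show ?thesis
    unfolding d_def[symmetric] by (simp add: algebra_simps)
qed

lemma sum_le_infsum_by_anchors:
  fixes \<phi> :: "'p \<Rightarrow> real" and \<Psi> :: "'y \<Rightarrow> real"
  assumes "finite Q" "\<And>p. p \<in> Q \<Longrightarrow> 0 \<le> \<phi> p"
    and "\<And>p. p \<in> Q \<Longrightarrow> \<phi> p \<noteq> 0 \<Longrightarrow> anc p \<noteq> {}" "\<And>p. p \<in> Q \<Longrightarrow> anc p \<subseteq> Y"
    and "\<Psi> summable_on Y" "\<And>y. y \<in> Y \<Longrightarrow> 0 \<le> \<Psi> y"
    and "\<And>y. y \<in> Y \<Longrightarrow> (\<Sum>p\<in>{p\<in>Q. y \<in> anc p}. \<phi> p) \<le> \<Psi> y"
  shows "sum \<phi> Q \<le> infsum \<Psi> Y"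
proof -
  define Q' where "Q' = {p\<in>Q. anc p \<noteq> {}}"
  define c where "c p = (SOME y. y \<in> anc p)" for p
  have c: "c p \<in> anc p" if "p \<in> Q'" for p
    using that unfolding Q'_def c_def by (auto intro: someI_ex)
  have "finite Q'" using assms(1) by (simp add: Q'_def)
  have "sum \<phi> Q = sum \<phi> Q'"
    using assms(1,3) by (intro sum.mono_neutral_right) (auto simp: Q'_def)
  also have "\<dots> = (\<Sum>y\<in>c ` Q'. \<Sum>p\<in>{p\<in>Q'. c p = y}. \<phi> p)"
    by (rule sum.image_gen[OF \<open>finite Q'\<close>])
  also have "\<dots> \<le> (\<Sum>y\<in>c ` Q'. \<Psi> y)"
  proof (rule sum_mono)
    fix y assume "y \<in> c ` Q'"
    then have "y \<in> Y" using c assms(4) by (auto simp: Q'_def)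
    have "(\<Sum>p\<in>{p\<in>Q'. c p = y}. \<phi> p) \<le> (\<Sum>p\<in>{p\<in>Q. y \<in> anc p}. \<phi> p)"
      using assms(1,2) c by (intro sum_mono2) (auto simp: Q'_def)
    then show "(\<Sum>p\<in>{p\<in>Q'. c p = y}. \<phi> p) \<le> \<Psi> y"
      using assms(7)[OF \<open>y \<in> Y\<close>] by linarith
  qed
  also have "\<dots> \<le> infsum \<Psi> Y"
    using c assms(4-6) \<open>finite Q'\<close> by (intro finite_sum_le_infsum) (auto simp: Q'_def)
  finally show ?thesis .
qed

definition overlapping_covers :: "'s set \<Rightarrow> ('s set \<times> 's set) set" where
  "overlapping_covers S = {(S1, S2). S1 \<subseteq> S \<and> S2 \<subseteq> S \<and> S1 \<union> S2 = S \<and> S1 \<inter> S2 \<noteq> {}}"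

lemma finite_overlapping_covers: "finite S \<Longrightarrow> finite (overlapping_covers S)"
  by (rule finite_subset[of _ "Pow S \<times> Pow S"]) (auto simp: overlapping_covers_def)

lemma norm_comm_int_le:
  fixes h h' :: "site set \<Rightarrow> 'a::real_normed_algebra_1"
  assumes "finite S"
  shows "norm (comm_int h h' S)
    \<le> (\<Sum>p\<in>overlapping_covers S. 2 * (norm (h (fst p)) * norm (h' (snd p))))"
proof -
  have "norm (comm_int h h' S)
      \<le> (\<Sum>p\<in>overlapping_covers S. norm (h (fst p) * h' (snd p) - h' (snd p) * h (fst p)))"
    using assms norm_sum unfolding comm_int_def overlapping_covers_def by fastforce
  also have "\<dots> \<le> (\<Sum>p\<in>overlapping_covers S. 2 * (norm (h (fst p)) * norm (h' (snd p))))"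
  proof (rule sum_mono)
    fix p
    have "norm (h (fst p) * h' (snd p) - h' (snd p) * h (fst p))
        \<le> norm (h (fst p)) * norm (h' (snd p)) + norm (h' (snd p)) * norm (h (fst p))"
      by (rule order_trans[OF norm_triangle_ineq4 add_mono[OF norm_mult_ineq norm_mult_ineq]])
    then show "norm (h (fst p) * h' (snd p) - h' (snd p) * h (fst p))
        \<le> 2 * (norm (h (fst p)) * norm (h' (snd p)))"
      by (simp add: mult.commute)
  qed
  finally show ?thesis .
qed

lemma norm_comm_int_summable_on:
  fixes h h' :: "site set \<Rightarrow> 'a::real_normed_algebra_1"
  assumes "\<And>Q. finite Q \<Longrightarrow>
      (\<And>p. p \<in> Q \<Longrightarrow> finite (fst p) \<and> finite (snd p) \<and> fst p \<inter> snd p \<noteq> {}) \<Longrightarrow>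
      (\<Sum>p\<in>Q. norm (h (fst p)) * norm (h' (snd p))) \<le> B"
  shows "(\<lambda>S. norm (comm_int h h' S)) summable_on {S. finite S}"
proof (rule nonneg_bdd_above_summable_on)
  let ?\<phi> = "\<lambda>p. norm (h (fst p)) * norm (h' (snd p))"
  have "(\<Sum>S\<in>G. norm (comm_int h h' S)) \<le> 2 * B" if G: "finite G" "G \<subseteq> {S. finite S}" for G
  proof -
    have "(\<Sum>S\<in>G. norm (comm_int h h' S)) \<le> (\<Sum>S\<in>G. \<Sum>p\<in>overlapping_covers S. 2 * ?\<phi> p)"
      using G by (intro sum_mono norm_comm_int_le) auto
    also have "\<dots> = 2 * (\<Sum>p\<in>(\<Union>S\<in>G. overlapping_covers S). ?\<phi> p)"
      using G finite_overlapping_covers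
      by (subst sum.UNION_disjoint) (auto simp: overlapping_covers_def sum_distrib_left)
    also have "\<dots> \<le> 2 * B"
      using G finite_overlapping_covers
      by (intro mult_left_mono assms) (auto simp: overlapping_covers_def intro: finite_subset)
    finally show ?thesis .
  qed
  then show "bdd_above (sum (\<lambda>S. norm (comm_int h h' S)) ` {G. G \<subseteq> {S. finite S} \<and> finite G})"
    by (intro bdd_aboveI[of _ "2 * B"]) auto
qed simp

lemma sum_overlapping_pairs_le_infsum:
  fixes h h' :: "site set \<Rightarrow> 'a::real_normed_vector" and f g :: "nat \<Rightarrow> real"
  defines "\<Phi> \<equiv> \<lambda>(x, x'). f (1 + (1 + dist_inf x x') div 2) + g (1 + (1 + dist_inf x x') div 2)"
  assumes f: "decay_class f" "fnorm_le f h M" and g: "decay_class g" "fnorm_le g h' M'"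
    and hX: "\<And>S. S \<inter> X = {} \<Longrightarrow> h S = 0" and h'X': "\<And>S. S \<inter> X' = {} \<Longrightarrow> h' S = 0"
    and "\<Phi> summable_on X \<times> X'"
    and Q: "finite Q" "\<And>p. p \<in> Q \<Longrightarrow> finite (fst p) \<and> finite (snd p) \<and> fst p \<inter> snd p \<noteq> {}"
  shows "(\<Sum>p\<in>Q. norm (h (fst p)) * norm (h' (snd p))) \<le> M * M' * (f 1 + g 1) * infsum \<Phi> (X \<times> X')"
proof -
  define K where "K = M * M' * (f 1 + g 1)"
  have "0 \<le> K"
    using f g fnorm_le_nonneg unfolding K_def decay_class_def
    by (intro mult_nonneg_nonneg add_nonneg_nonneg) (auto simp: less_imp_le)
  have "(\<Sum>p\<in>Q. norm (h (fst p)) * norm (h' (snd p))) \<le> (\<Sum>\<^sub>\<infinity>y\<in>X \<times> X'. K * \<Phi> y)"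
  proof (rule sum_le_infsum_by_anchors[where anc = "\<lambda>p. (fst p \<inter> X) \<times> (snd p \<inter> X')"])
    show "(\<lambda>y. K * \<Phi> y) summable_on X \<times> X'"
      by (rule summable_on_cmult_right) fact
    show "0 \<le> K * \<Phi> y" for y
      using f(1) g(1) \<open>0 \<le> K\<close> unfolding decay_class_def \<Phi>_def
      by (auto simp: case_prod_beta less_imp_le)
    show "(\<Sum>p\<in>{p\<in>Q. y \<in> (fst p \<inter> X) \<times> (snd p \<inter> X')}. norm (h (fst p)) * norm (h' (snd p)))
        \<le> K * \<Phi> y" for y
    proof -
      obtain x x' where y: "y = (x, x')" by (rule prod.exhaust)
      have "(\<Sum>p\<in>{p\<in>Q. (x, x') \<in> (fst p \<inter> X) \<times> (snd p \<inter> X')}. norm (h (fst p)) * norm (h' (snd p)))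
          \<le> K * \<Phi> (x, x')"
        unfolding K_def \<Phi>_def case_prod_conv
        by (rule sum_overlapping_pairs_le[OF f g]) (use Q in auto)
      then show ?thesis by (simp add: y)
    qed
  qed (use Q hX h'X' in auto)
  then show ?thesis
    by (simp add: K_def infsum_cmult_right')
qed

theorem lemmaA2:
  fixes A :: "site set \<Rightarrow> 'a::{real_normed_algebra_1,banach} set"
    and h h' :: "site set \<Rightarrow> 'a" and X X' :: "site set"
  assumes "quasi_local A"
    and "anchored A h X" and "anchored A h' X'"
    and "\<And>f. decay_class f \<Longrightarrow>
           (\<lambda>(x, x'). f (1 + dist_inf x x')) summable_on (X \<times> X')"
  shows "(\<lambda>S. norm (comm_int h h' S)) summable_on {S. finite S}
       \<and> comm_int h h' summable_on {S. finite S}"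
proof -
  obtain f M where f: "decay_class f" "fnorm_le f h M" and hX: "\<And>S. S \<inter> X = {} \<Longrightarrow> h S = 0"
    using assms(2) fnorm_finite_imp_fnorm_le unfolding anchored_def in_J_def by blast
  obtain g M' where g: "decay_class g" "fnorm_le g h' M'" and h'X': "\<And>S. S \<inter> X' = {} \<Longrightarrow> h' S = 0"
    using assms(3) fnorm_finite_imp_fnorm_le unfolding anchored_def in_J_def by blast
  have "decay_class (\<lambda>n. f (1 + n div 2) + g (1 + n div 2))"
    by (intro decay_class_add decay_class_half_shift f(1) g(1))
  note \<Phi> = assms(4)[OF this]
  have "(\<lambda>S. norm (comm_int h h' S)) summable_on {S. finite S}"
    using sum_overlapping_pairs_le_infsum[OF f g hX h'X' \<Phi>] by (rule norm_comm_int_summable_on)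
  then show ?thesis using abs_summable_summable by blast
qed

end
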